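(* Let $0<\beta<1$ and let $f\colon B_1-\overline{B}_\beta\to\mathbb{C}$ be an orientation preserving biholomorphic map onto its image such that $f(B_1-\overline{B}_\beta)=\Omega-K$ for some bounded open set $\Omega\subset\mathbb{C}$ and some compact subset $K\subset\Omega$. Then there exists a holomorphic function $g\colon B_1-\overline{B}_\beta\to\mathbb{C}$ such that $g^2=1/\partial_z f$.
   Context: $B_r$ denotes the open disk of radius $r$ centered at $0$ in $\mathbb{C}$, and $B_1-\overline{B}_\beta=\{z:\beta<|z|<1\}$. *)

theory Defs
  imports "HOL-Complex_Analysis.Complex_Analysis"
begin

end

theory Submission
  imports Defs
begin

(* In the coordinate w with z = exp w the annulus becomes the strip ln beta < Re w < 0, and a
   continuous logarithm L of f'(exp w) has L(w + 2 pi i) - L(w) = 2 pi i k, where k is the winding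
   number of f' around a circle. A square root of 1/f' exists once k is even.
   Evenness comes from the divided difference Q(z, z') = (f z - f z') / (z - z'), extended by f' on
   the diagonal: it is continuous, and nonvanishing because f is injective. Following a logarithm of
   Q(exp w, exp (w + i t)) from t = 0 (where Q = f') to t = pi (where Q(z, -z) = Q(-z, z))
   exhibits the increment over a full turn as twice the increment over a half turn. *)

lemma exp_eq_1_imp_constant_on:
  fixes E :: "'a::topological_space \<Rightarrow> complex"
  assumes "connected S" "continuous_on S E" "\<And>x. x \<in> S \<Longrightarrow> exp (E x) = 1"
  shows "E constant_on S"
proof (rule continuous_discrete_range_constant[OF assms(1,2)])
  fix x assume "x \<in> S"
  show "\<exists>e>0. \<forall>y. y \<in> S \<and> E y \<noteq> E x \<longrightarrow> e \<le> norm (E y - E x)"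
  proof (intro exI[of _ "2*pi"] conjI allI impI)
    fix y assume y: "y \<in> S \<and> E y \<noteq> E x"
    then have "exp (E y) = exp (E x)" using assms(3) \<open>x \<in> S\<close> by simp
    then obtain n :: int where n: "E y - E x = of_int n * (2 * pi * \<i>)"
      by (auto simp: exp_eq algebra_simps)
    with y have "n \<noteq> 0" by auto
    then have "1 \<le> \<bar>real_of_int n\<bar>" by linarith
    then show "2*pi \<le> norm (E y - E x)"
      by (simp add: n norm_mult)
  qed simp
qed

lemma periodic_add_of_int_mult:
  fixes p :: "'a::ring_1"
  assumes "\<And>w. w \<in> S \<Longrightarrow> w + p \<in> S" "\<And>w. w \<in> S \<Longrightarrow> w - p \<in> S"
    and "\<And>w. w \<in> S \<Longrightarrow> \<psi> (w + p) = \<psi> w" and "w \<in> S"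
  shows "w + of_int n * p \<in> S \<and> \<psi> (w + of_int n * p) = \<psi> w"
proof (induction n rule: int_induct[of _ 0])
  case (step1 i)
  then show ?case
    using assms(1,3)[of "w + of_int i * p"] by (simp add: algebra_simps)
next
  case (step2 i)
  then show ?case
    using assms(2) assms(3)[of "w + of_int i * p - p"] by (simp add: algebra_simps)
qed (use assms(4) in simp)

lemma periodic_eq_if_exp_eq:
  assumes "\<And>w. w \<in> S \<Longrightarrow> w + 2*pi*\<i> \<in> S" "\<And>w. w \<in> S \<Longrightarrow> w - 2*pi*\<i> \<in> S"
    and "\<And>w. w \<in> S \<Longrightarrow> \<psi> (w + 2*pi*\<i>) = \<psi> w"
    and "w \<in> S" "exp w' = exp w"
  shows "w' \<in> S \<and> \<psi> w' = \<psi> w"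
proof -
  obtain n :: int where "w' = w + of_int n * (2*pi*\<i>)"
    using \<open>exp w' = exp w\<close> by (auto simp: exp_eq algebra_simps)
  then show ?thesis
    using periodic_add_of_int_mult[of S "2*pi*\<i>" \<psi>, OF assms(1-4)] by simp
qed

lemma holomorphic_on_periodic_comp_Ln:
  assumes "\<psi> holomorphic_on S"
    and "\<And>w. w \<in> S \<Longrightarrow> w + 2*pi*\<i> \<in> S" "\<And>w. w \<in> S \<Longrightarrow> w - 2*pi*\<i> \<in> S"
    and "\<And>w. w \<in> S \<Longrightarrow> \<psi> (w + 2*pi*\<i>) = \<psi> w"
    and "open A" "A \<subseteq> exp ` S"
  shows "(\<lambda>z. \<psi> (Ln z)) holomorphic_on A"
proof -
  have log_in_S: "w' \<in> S \<and> \<psi> w' = \<psi> (Ln z)" if "z \<in> A" "exp w' = z" for z w'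
  proof -
    obtain w where w: "w \<in> S" "z = exp w" using \<open>A \<subseteq> exp ` S\<close> \<open>z \<in> A\<close> by blast
    then have "exp (Ln z) = exp w" by simp
    then show ?thesis
      using periodic_eq_if_exp_eq[of S \<psi>, OF assms(2-4) \<open>w \<in> S\<close>] w that by metis
  qed
  have nonzero: "z \<noteq> 0" if "z \<in> A" for z
    using that \<open>A \<subseteq> exp ` S\<close> by auto
  define A1 where "A1 = A - \<real>\<^sub>\<le>\<^sub>0"
  define A2 where "A2 = A \<inter> {z. Re z < 0}"
  have "(\<psi> \<circ> Ln) holomorphic_on A1"
    using log_in_S nonzero
    by (intro holomorphic_on_compose_gen[OF _ assms(1)]) (auto simp: A1_def intro!: holomorphic_on_Ln)
  then have hol1: "(\<lambda>z. \<psi> (Ln z)) holomorphic_on A1"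
    by (simp add: o_def)
  \<comment> \<open>on the left half plane, \<open>Ln (- z) + \<i>\<pi>\<close> is a logarithm of \<open>z\<close> that is holomorphic
      across the negative axis\<close>
  have exp_left_log: "exp (Ln (- z) + pi*\<i>) = z" if "z \<in> A2" for z
    using that nonzero by (simp add: A2_def exp_add)
  have "(\<psi> \<circ> (\<lambda>z. Ln (- z) + pi*\<i>)) holomorphic_on A2"
    using log_in_S[OF _ exp_left_log]
    by (intro holomorphic_on_compose_gen[OF _ assms(1)])
       (auto simp: A2_def complex_nonpos_Reals_iff intro!: holomorphic_intros)
  moreover have "\<psi> (Ln (- z) + pi*\<i>) = \<psi> (Ln z)" if "z \<in> A2" for z
    using log_in_S[OF _ exp_left_log] that by (auto simp: A2_def)
  ultimately have hol2: "(\<lambda>z. \<psi> (Ln z)) holomorphic_on A2"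
    by (auto intro: holomorphic_transform)
  have "A = A1 \<union> A2"
    using nonzero by (force simp: A1_def A2_def complex_nonpos_Reals_iff complex_eq_iff)
  moreover have "open A1" "open A2"
    using \<open>open A\<close> by (auto simp: A1_def A2_def intro!: open_Diff open_Int open_halfspace_Re_lt)
  ultimately show ?thesis
    using holomorphic_on_Un[OF hol1 hol2] by simp
qed

definition divided_diff :: "(complex \<Rightarrow> complex) \<Rightarrow> complex \<Rightarrow> complex \<Rightarrow> complex" where
  "divided_diff f z w = (if z = w then deriv f z else (f z - f w) / (z - w))"

lemma divided_diff_same [simp]: "divided_diff f z z = deriv f z"
  by (simp add: divided_diff_def)

lemma divided_diff_commute: "divided_diff f z w = divided_diff f w z"
  by (metis divided_diff_def minus_diff_eq minus_divide_divide)

lemma divided_diff_nonzero: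
  assumes "f holomorphic_on A" "open A" "inj_on f A" "z \<in> A" "w \<in> A"
  shows "divided_diff f z w \<noteq> 0"
  using holomorphic_injective_imp_regular[OF assms(1-3)] assms(3-5)
  by (auto simp: divided_diff_def inj_on_def)

lemma divided_diff_near_deriv:
  assumes "f holomorphic_on A" "open A" "ball a r \<subseteq> A"
    and "\<And>y. y \<in> ball a r \<Longrightarrow> norm (deriv f y - deriv f a) \<le> e"
    and "z \<in> ball a r" "w \<in> ball a r"
  shows "norm (divided_diff f z w - deriv f a) \<le> e"
proof (cases "z = w")
  case True
  then show ?thesis using assms(4,5) by simp
next
  case False
  have "\<And>y. y \<in> ball a r \<Longrightarrow> ((\<lambda>x. f x - deriv f a * x) has_field_derivative
          deriv f y - deriv f a) (at y within ball a r)"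
    using assms(3) by (auto intro!: derivative_eq_intros holomorphic_derivI[OF assms(1,2)])
  from field_differentiable_bound[OF convex_ball this assms(4-6)]
  have "norm ((f z - f w) - deriv f a * (z - w)) \<le> e * norm (z - w)"
    by (simp add: algebra_simps)
  moreover have "divided_diff f z w - deriv f a = ((f z - f w) - deriv f a * (z - w)) / (z - w)"
    using False by (simp add: divided_diff_def field_simps)
  ultimately show ?thesis
    using False by (simp add: norm_divide divide_le_eq)
qed

lemma isCont_divided_diff_diagonal:
  assumes "f holomorphic_on A" "open A" "a \<in> A"
  shows "isCont (\<lambda>p. divided_diff f (fst p) (snd p)) (a, a)"
  unfolding continuous_at_eps_delta
proof (intro allI impI)
  fix e :: real assume "e > 0"
  have "isCont (deriv f) a"
    using holomorphic_on_imp_continuous_on[OF holomorphic_deriv[OF assms(1,2)]] assms(2,3)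
    by (simp add: continuous_on_eq_continuous_at)
  then obtain d where "d > 0" and d: "\<And>y. dist y a < d \<Longrightarrow> dist (deriv f y) (deriv f a) < e/2"
    using \<open>e > 0\<close> unfolding continuous_at_eps_delta by (meson half_gt_zero)
  obtain r1 where "r1 > 0" "ball a r1 \<subseteq> A"
    using openE[OF assms(2,3)] by blast
  define r where "r = min r1 d"
  have "r > 0" "ball a r \<subseteq> A"
    using \<open>r1 > 0\<close> \<open>d > 0\<close> \<open>ball a r1 \<subseteq> A\<close> by (auto simp: r_def)
  have near: "norm (deriv f y - deriv f a) \<le> e/2" if "y \<in> ball a r" for y
    using d[of y] that by (simp add: r_def dist_norm norm_minus_commute)
  have "dist (divided_diff f (fst q) (snd q)) (divided_diff f a a) < e"
    if "dist q (a, a) < r" for q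
  proof -
    have "fst q \<in> ball a r" "snd q \<in> ball a r"
      using that dist_fst_le[of q "(a,a)"] dist_snd_le[of q "(a,a)"] by (auto simp: dist_commute)
    from divided_diff_near_deriv[OF assms(1,2) \<open>ball a r \<subseteq> A\<close> near this]
    show ?thesis
      using \<open>e > 0\<close> by (simp add: dist_norm)
  qed
  then show "\<exists>d>0. \<forall>q. dist q (a, a) < d \<longrightarrow>
      dist (divided_diff f (fst q) (snd q)) (divided_diff f (fst (a, a)) (snd (a, a))) < e"
    using \<open>r > 0\<close> by auto
qed

lemma continuous_on_divided_diff:
  assumes "f holomorphic_on A" "open A"
  shows "continuous_on (A \<times> A) (\<lambda>p. divided_diff f (fst p) (snd p))"
proof (subst continuous_on_eq_continuous_at[OF open_Times[OF assms(2,2)]], safe)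
  fix a b assume "a \<in> A" "b \<in> A"
  show "isCont (\<lambda>p. divided_diff f (fst p) (snd p)) (a, b)"
  proof (cases "a = b")
    case False
    define U where "U = (A \<times> A) \<inter> {p. fst p \<noteq> snd p}"
    have "open U"
      unfolding U_def by (intro open_Int open_Times assms(2) open_Collect_neq continuous_intros)
    have "continuous_on U (\<lambda>p. (f (fst p) - f (snd p)) / (fst p - snd p))"
      using holomorphic_on_imp_continuous_on[OF assms(1)]
      by (auto simp: U_def intro!: continuous_intros continuous_on_compose2[of A f])
    then have "continuous_on U (\<lambda>p. divided_diff f (fst p) (snd p))"
      by (rule continuous_on_eq) (auto simp: U_def divided_diff_def)
    moreover have "(a, b) \<in> U" using \<open>a \<in> A\<close> \<open>b \<in> A\<close> False by (simp add: U_def)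
    ultimately show ?thesis
      using \<open>open U\<close> continuous_on_eq_continuous_at by blast
  qed (use isCont_divided_diff_diagonal[OF assms \<open>a \<in> A\<close>] in simp)
qed

lemma continuous_log_imp_holomorphic:
  assumes "h holomorphic_on S" "connected S" "continuous_on S L"
    and "\<And>w. w \<in> S \<Longrightarrow> exp (L w) = h w"
  shows "L holomorphic_on S"
proof -
  obtain G where G: "G holomorphic_on S" "\<And>w. w \<in> S \<Longrightarrow> h w = exp (G w)"
    using g_imp_holomorphic_log[OF assms(1,3)] assms(4) by (metis exp_not_eq_zero)
  have "(\<lambda>w. G w - L w) constant_on S"
    using G assms(3,4) holomorphic_on_imp_continuous_on[OF G(1)]
    by (intro exp_eq_1_imp_constant_on[OF assms(2)]) (auto intro!: continuous_intros simp: exp_diff)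
  then obtain c where c: "\<And>w. w \<in> S \<Longrightarrow> G w - L w = c"
    unfolding constant_on_def by blast
  have "(\<lambda>w. G w - c) holomorphic_on S"
    using G(1) by (intro holomorphic_intros)
  then show ?thesis
    by (rule holomorphic_transform) (use c in force)
qed

lemma continuous_log_divided_diff_exp:
  fixes f :: "complex \<Rightarrow> complex" and I :: "real set"
  assumes "f holomorphic_on A" "open A" "inj_on f A" "convex S" "convex I"
    and "\<And>w t. w \<in> S \<Longrightarrow> exp (w + of_real t * \<i>) \<in> A"
  obtains \<Lambda> where "continuous_on (S \<times> I) \<Lambda>"
    "\<And>w t. w \<in> S \<Longrightarrow> t \<in> I \<Longrightarrow>
       exp (\<Lambda> (w, t)) = divided_diff f (exp w) (exp (w + of_real t * \<i>))"
proof -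
  define \<Phi> where "\<Phi> p = divided_diff f (exp (fst p)) (exp (fst p + of_real (snd p) * \<i>))" for p
  let ?ends = "\<lambda>p. (exp (fst p), exp (fst p + of_real (snd p) * \<i>))"
  have "?ends ` (S \<times> I) \<subseteq> A \<times> A"
    using assms(6)[of _ 0] assms(6) by auto
  then have "continuous_on (S \<times> I) ((\<lambda>q. divided_diff f (fst q) (snd q)) \<circ> ?ends)"
    by (intro continuous_on_compose continuous_intros
        continuous_on_subset[OF continuous_on_divided_diff[OF assms(1,2)]])
  then have "continuous_on (S \<times> I) \<Phi>"
    by (simp add: \<Phi>_def o_def)
  moreover have "\<Phi> p \<noteq> 0" if "p \<in> S \<times> I" for p
    using that divided_diff_nonzero[OF assms(1-3) assms(6)[of "fst p" 0] assms(6)[of "fst p" "snd p"]]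
    by (auto simp: \<Phi>_def)
  moreover have "contractible (S \<times> I)"
    using assms(4,5) by (intro convex_imp_contractible convex_Times)
  ultimately obtain \<Lambda> where "continuous_on (S \<times> I) \<Lambda>"
    and \<Lambda>: "\<And>p. p \<in> S \<times> I \<Longrightarrow> \<Phi> p = exp (\<Lambda> p)"
    using continuous_logarithm_on_contractible by metis
  then show ?thesis
    by (intro that) (auto simp: \<Phi>_def \<Lambda>[symmetric])
qed

lemma log_increment_constant_on:
  fixes \<Lambda> :: "'a::topological_space \<Rightarrow> complex"
  assumes "connected T" "continuous_on T \<Lambda>" "continuous_on T \<sigma>" "\<sigma> ` T \<subseteq> T"
    and "\<And>p. p \<in> T \<Longrightarrow> exp (\<Lambda> (\<sigma> p)) = exp (\<Lambda> p)"
  shows "(\<lambda>p. \<Lambda> (\<sigma> p) - \<Lambda> p) constant_on T"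
proof (rule exp_eq_1_imp_constant_on[OF assms(1)])
  show "continuous_on T (\<lambda>p. \<Lambda> (\<sigma> p) - \<Lambda> p)"
    by (intro continuous_intros continuous_on_compose2[OF assms(2) assms(3,4)] assms(2))
  show "exp (\<Lambda> (\<sigma> p) - \<Lambda> p) = 1" if "p \<in> T" for p
    using assms(5)[OF that] by (simp add: exp_diff)
qed

lemma log_divided_diff_exp_even_increment:
  assumes "convex S" and S_shift: "\<And>w t. w \<in> S \<Longrightarrow> w + of_real t * \<i> \<in> S"
    and "continuous_on (S \<times> {0..pi}) \<Lambda>"
    and \<Lambda>: "\<And>w t. w \<in> S \<Longrightarrow> t \<in> {0..pi} \<Longrightarrow>
                 exp (\<Lambda> (w, t)) = divided_diff f (exp w) (exp (w + of_real t * \<i>))"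
    and "w \<in> S"
  shows "exp ((\<Lambda> (w + 2*pi*\<i>, 0) - \<Lambda> (w, 0)) / 2) = 1"
proof -
  define T where "T = S \<times> {0..pi}"
  \<comment> \<open>The increment of \<open>\<Lambda>\<close> under \<open>w \<mapsto> w + 2\<pi>i\<close> does not depend on \<open>t\<close>;
      at \<open>t = \<pi>\<close> it splits into two equal increments under \<open>w \<mapsto> w + \<pi>i\<close>,
      because \<open>divided_diff f z (-z)\<close> is symmetric.\<close>
  define E where "E p = \<Lambda> (fst p + 2*pi*\<i>, snd p) - \<Lambda> p" for p
  have "E constant_on T"
    unfolding E_def
  proof (rule log_increment_constant_on[where \<sigma> = "\<lambda>p. (fst p + 2*pi*\<i>, snd p)"])
    show "connected T"
      unfolding T_def using assms(1) by (intro convex_connected convex_Times) auto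
    show "(\<lambda>p. (fst p + 2*pi*\<i>, snd p)) ` T \<subseteq> T"
      using S_shift[of _ "2*pi"] by (auto simp: T_def)
    show "exp (\<Lambda> (fst p + 2*pi*\<i>, snd p)) = exp (\<Lambda> p)" if "p \<in> T" for p
      using that S_shift[of "fst p" "2*pi"] by (auto simp: T_def \<Lambda> exp_add)
  qed (use \<open>continuous_on (S \<times> {0..pi}) \<Lambda>\<close> in \<open>auto simp: T_def intro!: continuous_intros\<close>)
  define F where "F v = \<Lambda> (v + pi*\<i>, pi) - \<Lambda> (v, pi)" for v
  have antipodal: "exp (\<Lambda> (v, pi)) = divided_diff f (exp v) (- exp v)" if "v \<in> S" for v
    using that by (simp add: \<Lambda> exp_add)
  have half_turn: "exp (\<Lambda> (v + pi*\<i>, pi)) = exp (\<Lambda> (v, pi))" if "v \<in> S" for v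
    using that S_shift[of v pi] by (simp add: antipodal exp_add divided_diff_commute)
  have "F constant_on S"
    unfolding F_def
  proof (rule log_increment_constant_on[where \<sigma> = "\<lambda>v. v + pi*\<i>" and \<Lambda> = "\<lambda>v. \<Lambda> (v, pi)"])
    show "continuous_on S (\<lambda>v. \<Lambda> (v, pi))"
      by (intro continuous_on_compose2[OF \<open>continuous_on (S \<times> {0..pi}) \<Lambda>\<close>] continuous_intros) auto
  qed (use assms(1) S_shift[of _ pi] half_turn in \<open>auto intro!: continuous_intros convex_connected\<close>)
  then have "F (w + pi*\<i>) = F w"
    using \<open>w \<in> S\<close> S_shift[OF \<open>w \<in> S\<close>, of pi] by (auto simp: constant_on_def)
  have "\<Lambda> (w + 2*pi*\<i>, 0) - \<Lambda> (w, 0) = E (w, 0)"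
    by (simp add: E_def)
  also have "\<dots> = E (w, pi)"
    using \<open>E constant_on T\<close> \<open>w \<in> S\<close> by (auto simp: T_def constant_on_def)
  also have "\<dots> = F (w + pi*\<i>) + F w"
    by (simp add: E_def F_def algebra_simps)
  also have "\<dots> = 2 * F w"
    using \<open>F (w + pi*\<i>) = F w\<close> by simp
  finally have "(\<Lambda> (w + 2*pi*\<i>, 0) - \<Lambda> (w, 0)) / 2 = F w"
    by simp
  moreover have "exp (F w) = 1"
    using half_turn[OF \<open>w \<in> S\<close>] by (simp add: F_def exp_diff)
  ultimately show ?thesis
    by simp
qed

lemma log_deriv_injective_even_period:
  fixes f :: "complex \<Rightarrow> complex"
  assumes "f holomorphic_on A" "open A" "inj_on f A"
    and "convex S" "exp ` S \<subseteq> A" "\<And>w t. w \<in> S \<Longrightarrow> w + of_real t * \<i> \<in> S"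
  obtains L where "continuous_on S L" "\<And>w. w \<in> S \<Longrightarrow> exp (L w) = deriv f (exp w)"
    "\<And>w. w \<in> S \<Longrightarrow> exp ((L (w + 2*pi*\<i>) - L w) / 2) = 1"
proof -
  obtain \<Lambda> where "continuous_on (S \<times> {0..pi}) \<Lambda>" and \<Lambda>:
    "\<And>w t. w \<in> S \<Longrightarrow> t \<in> {0..pi} \<Longrightarrow>
       exp (\<Lambda> (w, t)) = divided_diff f (exp w) (exp (w + of_real t * \<i>))"
    using continuous_log_divided_diff_exp[OF assms(1-4) convex_real_interval(5)] assms(5,6) by blast
  show ?thesis
  proof
    show "continuous_on S (\<lambda>w. \<Lambda> (w, 0))"
      by (intro continuous_intros continuous_on_compose2[OF \<open>continuous_on (S \<times> {0..pi}) \<Lambda>\<close>]) auto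
    show "exp (\<Lambda> (w, 0)) = deriv f (exp w)" if "w \<in> S" for w
      using that by (simp add: \<Lambda>)
    show "exp ((\<Lambda> (w + 2*pi*\<i>, 0) - \<Lambda> (w, 0)) / 2) = 1" if "w \<in> S" for w
      using log_divided_diff_exp_even_increment[OF assms(4,6)] \<open>continuous_on (S \<times> {0..pi}) \<Lambda>\<close> \<Lambda> that
      by blast
  qed
qed

lemma exp_image_vertical_strip:
  assumes "0 < r" "0 < R"
  shows "exp ` {w. ln r < Re w \<and> Re w < ln R} = {z. r < norm z \<and> norm z < R}"
proof (intro equalityI subsetI)
  fix z assume "z \<in> exp ` {w. ln r < Re w \<and> Re w < ln R}"
  then obtain w where "z = exp w" "ln r < Re w" "Re w < ln R" by blast
  then show "z \<in> {z. r < norm z \<and> norm z < R}"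
    using assms ln_less_cancel_iff[of r "exp (Re w)"] ln_less_cancel_iff[of "exp (Re w)" R] by simp
next
  fix z :: complex assume z: "z \<in> {z. r < norm z \<and> norm z < R}"
  then have "z \<noteq> 0" using assms by auto
  with z assms have "Ln z \<in> {w. ln r < Re w \<and> Re w < ln R}" by simp
  then show "z \<in> exp ` {w. ln r < Re w \<and> Re w < ln R}"
    using exp_Ln[OF \<open>z \<noteq> 0\<close>] by (metis image_eqI)
qed

lemma holomorphic_sqrt_inverse_deriv_injective:
  fixes f :: "complex \<Rightarrow> complex"
  assumes "f holomorphic_on A" "open A" "inj_on f A"
    and "convex S" "exp ` S = A" "\<And>w t. w \<in> S \<Longrightarrow> w + of_real t * \<i> \<in> S"
  obtains g where "g holomorphic_on A" "\<And>z. z \<in> A \<Longrightarrow> (g z)\<^sup>2 = 1 / deriv f z"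
proof -
  obtain L where "continuous_on S L" and L: "\<And>w. w \<in> S \<Longrightarrow> exp (L w) = deriv f (exp w)"
    and L_period: "\<And>w. w \<in> S \<Longrightarrow> exp ((L (w + 2*pi*\<i>) - L w) / 2) = 1"
    using log_deriv_injective_even_period[OF assms(1-4) equalityD1[OF assms(5)] assms(6)] by blast
  have "(\<lambda>w. deriv f (exp w)) holomorphic_on S"
    using holomorphic_deriv[OF assms(1,2)] assms(5)
    by (intro holomorphic_on_compose_gen[OF holomorphic_on_exp, unfolded o_def]) auto
  then have "L holomorphic_on S"
    using continuous_log_imp_holomorphic convex_connected assms(4) \<open>continuous_on S L\<close> L by blast
  define \<psi> where "\<psi> w = exp (- L w / 2)" for w
  have "\<psi> holomorphic_on S"
    unfolding \<psi>_def using \<open>L holomorphic_on S\<close> by (intro holomorphic_intros) auto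
  have \<psi>_period: "\<psi> (w + 2*pi*\<i>) = \<psi> w" if "w \<in> S" for w
  proof -
    have "- L (w + 2*pi*\<i>) / 2 = - L w / 2 - (L (w + 2*pi*\<i>) - L w) / 2"
      by (simp add: field_simps)
    then show ?thesis
      using L_period[OF that] by (simp add: \<psi>_def exp_diff)
  qed
  have S_period: "w + 2*pi*\<i> \<in> S" "w - 2*pi*\<i> \<in> S" if "w \<in> S" for w
    using assms(6)[OF that, of "2*pi"] assms(6)[OF that, of "-2*pi"] by simp_all
  show ?thesis
  proof
    show "(\<lambda>z. \<psi> (Ln z)) holomorphic_on A"
      using holomorphic_on_periodic_comp_Ln[OF \<open>\<psi> holomorphic_on S\<close> S_period \<psi>_period assms(2)] assms(5)
      by blast
    show "(\<psi> (Ln z))\<^sup>2 = 1 / deriv f z" if "z \<in> A" for z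
    proof -
      obtain w where "w \<in> S" "z = exp w"
        using \<open>z \<in> A\<close> assms(5) by blast
      then have "Ln z \<in> S" "exp (Ln z) = z"
        using periodic_eq_if_exp_eq[of S \<psi>, OF S_period \<psi>_period] by auto
      have "(\<psi> (Ln z))\<^sup>2 = exp (- L (Ln z))"
        by (simp add: \<psi>_def exp_double[symmetric])
      then show ?thesis
        using L[OF \<open>Ln z \<in> S\<close>] \<open>exp (Ln z) = z\<close> by (simp add: exp_minus inverse_eq_divide)
    qed
  qed
qed

theorem lemma2p2:
  fixes f :: "complex \<Rightarrow> complex" and \<beta> :: real
    and \<Omega> K :: "complex set"
  assumes "0 < \<beta>" "\<beta> < 1"
    and "f holomorphic_on {z. \<beta> < norm z \<and> norm z < 1}"
    and "inj_on f {z. \<beta> < norm z \<and> norm z < 1}"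
    and "open \<Omega>" "bounded \<Omega>" "compact K" "K \<subseteq> \<Omega>"
    and "f ` {z. \<beta> < norm z \<and> norm z < 1} = \<Omega> - K"
  shows "\<exists>g. g holomorphic_on {z. \<beta> < norm z \<and> norm z < 1} \<and>
           (\<forall>z \<in> {z. \<beta> < norm z \<and> norm z < 1}. (g z)\<^sup>2 = 1 / deriv f z)"
proof -
  define A where "A = {z::complex. \<beta> < norm z \<and> norm z < 1}"
  define S where "S = {w. ln \<beta> < Re w \<and> Re w < 0}"
  have "exp ` S = A"
    using exp_image_vertical_strip[of \<beta> 1] assms(1) by (simp add: A_def S_def)
  have "open A"
    unfolding A_def by (intro open_Collect_conj open_Collect_less continuous_intros)
  have "convex S"
    unfolding S_def using convex_Int[OF convex_halfspace_Re_gt convex_halfspace_Re_lt]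
    by (simp add: Int_def)
  obtain g where "g holomorphic_on A" "\<And>z. z \<in> A \<Longrightarrow> (g z)\<^sup>2 = 1 / deriv f z"
    using holomorphic_sqrt_inverse_deriv_injective[OF assms(3)[folded A_def] \<open>open A\<close>
        assms(4)[folded A_def] \<open>convex S\<close> \<open>exp ` S = A\<close>]
    by (auto simp: S_def)
  then show ?thesis
    unfolding A_def by blast
qed

end
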